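(* Let $\mathcal G$ be a network with out-degree vector $w$, $h\in\mathbb R^{\mathcal V}$, and assume $\mathcal G$ is $h$-indecomposable. Consider the coordination game on $\mathcal G$ with external field $h$. Then: (i) if $|h|\le w$, then $\mathcal X^*_h=\{\pm\mathbf 1\}$ and it is globally I-stable; (ii) if $|h|<w$, then $\mathcal X^*_h=\{\pm\mathbf 1\}$ and it is globally BR-stable; (iii) if $w\ngeq a h$ for some $a\in\{\pm1\}$, then $\mathcal X^*_h=\{a\mathbf 1\}$ and it is globally BR-stable.
   Context: A network is $\mathcal G=(\mathcal V,\mathcal E,W)$ with finite node set $\mathcal V$, links $\mathcal E\subseteq\mathcal V\times\mathcal V$, weight matrix $W\in\mathbb R_+^{\mathcal V\times\mathcal V}$ with zero diagonal, $W_{ij}>0$ iff $(i,j)\in\mathcal E$; for $\mathcal S\subseteq\mathcal V$, $w_i^{\mathcal S}=\sum_{j\in\mathcal S}W_{ij}$; $w=W\mathbf 1$. $\mathcal X=\{-1,+1\}^{\mathcal V}$. Componentwise order: $x\le y$ iff $x_i\le y_i$ for all $i$, $x<y$ iff $x_i<y_i$ for all $i$, $x\ngeq y$ iff $x_i<y_i$ for some $i$; $|h|$ is the entrywise absolute value. $h$-indecomposable: for every partition $\mathcal V=\mathcal V^+\cup\mathcal V^-$ into two disjoint nonempty sets there exist $s\in\{-,+\}$ and $i\in\mathcal V^s$ with $w_i^{\mathcal V^s}+s\,h_i<w_i^{\mathcal V^{-s}}$ ($s\,h_i$ is $\pm h_i$ according to $s$, $-s$ is the opposite sign). Coordination game with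 external field $h$: players $\mathcal V$, actions $\{\pm1\}$, utilities $u_i(x)=x_i(\sum_jW_{ij}x_j+h_i)$; equilibria $x^*$ with $x^*_i$ maximizing $u_i(\cdot,x^*_{-i})$, set $\mathcal X^*_h$. An admissible path is a sequence $x^{(0)},\dots,x^{(l)}$ ($l\ge0$) with consecutive configurations differing exactly in the action of one player $i_k$; it is an I-path if $u_{i_k}(x^{(k)})>u_{i_k}(x^{(k-1)})$ for all $k$, a BR-path if $u_{i_k}(x^{(k)})\ge u_{i_k}(x^{(k-1)})$ for all $k$. For $\alpha\in\{\mathrm I,\mathrm{BR}\}$, $\mathcal Y\subseteq\mathcal X$ is globally $\alpha$-stable if from every $x\in\mathcal X$ there is an $\alpha$-path to some element of $\mathcal Y$, and there is no $\alpha$-path from any $y\in\mathcal Y$ to any $z\notin\mathcal Y$. *)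

theory Defs
  imports Complex_Main
begin

(* Node set = the finite type 'v (V = UNIV). W i j is the weight of link (i,j);
   the link set E = {(i,j). W i j > 0} is implicit. *)
definition network :: "('v::finite \<Rightarrow> 'v \<Rightarrow> real) \<Rightarrow> bool" where
  "network W \<longleftrightarrow> (\<forall>i j. 0 \<le> W i j) \<and> (\<forall>i. W i i = 0)"

definition wS :: "('v::finite \<Rightarrow> 'v \<Rightarrow> real) \<Rightarrow> 'v set \<Rightarrow> 'v \<Rightarrow> real" where
  "wS W S i = (\<Sum>j\<in>S. W i j)"

definition outdeg :: "('v::finite \<Rightarrow> 'v \<Rightarrow> real) \<Rightarrow> 'v \<Rightarrow> real" where
  "outdeg W i = (\<Sum>j\<in>UNIV. W i j)"

(* h-indecomposability; V^+ = P, V^- = -P *)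
definition h_indecomposable ::
  "('v::finite \<Rightarrow> 'v \<Rightarrow> real) \<Rightarrow> ('v \<Rightarrow> real) \<Rightarrow> bool" where
  "h_indecomposable W h \<longleftrightarrow>
     (\<forall>P. P \<noteq> {} \<and> - P \<noteq> {} \<longrightarrow>
        (\<exists>i\<in>P. wS W P i + h i < wS W (- P) i) \<or>
        (\<exists>i\<in>- P. wS W (- P) i - h i < wS W P i))"

definition configs :: "('v \<Rightarrow> real) set" where
  "configs = {x. \<forall>i. x i = 1 \<or> x i = -1}"

definition utility ::
  "('v::finite \<Rightarrow> 'v \<Rightarrow> real) \<Rightarrow> ('v \<Rightarrow> real) \<Rightarrow> 'v \<Rightarrow> ('v \<Rightarrow> real) \<Rightarrow> real" where
  "utility W h i x = x i * ((\<Sum>j\<in>UNIV. W i j * x j) + h i)"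

definition equilibria ::
  "('v::finite \<Rightarrow> 'v \<Rightarrow> real) \<Rightarrow> ('v \<Rightarrow> real) \<Rightarrow> ('v \<Rightarrow> real) set" where
  "equilibria W h = {x \<in> configs. \<forall>i. \<forall>a\<in>{-1, 1}.
       utility W h i (x(i := a)) \<le> utility W h i x}"

datatype dynamics = Imp | BR

definition adm_step :: "('v \<Rightarrow> real) \<Rightarrow> ('v \<Rightarrow> real) \<Rightarrow> 'v \<Rightarrow> bool" where
  "adm_step x y i \<longleftrightarrow> x \<in> configs \<and> y \<in> configs \<and> y i \<noteq> x i \<and> (\<forall>j. j \<noteq> i \<longrightarrow> y j = x j)"

definition improves ::
  "dynamics \<Rightarrow> ('v::finite \<Rightarrow> 'v \<Rightarrow> real) \<Rightarrow> ('v \<Rightarrow> real) \<Rightarrow> 'v \<Rightarrow> ('v \<Rightarrow> real) \<Rightarrow> ('v \<Rightarrow> real) \<Rightarrow> bool" where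
  "improves \<alpha> W h i x y =
     (case \<alpha> of Imp \<Rightarrow> utility W h i y > utility W h i x
              | BR \<Rightarrow> utility W h i y \<ge> utility W h i x)"

definition alpha_path ::
  "dynamics \<Rightarrow> ('v::finite \<Rightarrow> 'v \<Rightarrow> real) \<Rightarrow> ('v \<Rightarrow> real) \<Rightarrow> ('v \<Rightarrow> real) list \<Rightarrow> bool" where
  "alpha_path \<alpha> W h p \<longleftrightarrow> p \<noteq> [] \<and> set p \<subseteq> configs \<and>
     (\<forall>k. Suc k < length p \<longrightarrow>
        (\<exists>i. adm_step (p ! k) (p ! Suc k) i \<and> improves \<alpha> W h i (p ! k) (p ! Suc k)))"

definition reaches ::
  "dynamics \<Rightarrow> ('v::finite \<Rightarrow> 'v \<Rightarrow> real) \<Rightarrow> ('v \<Rightarrow> real) \<Rightarrow> ('v \<Rightarrow> real) \<Rightarrow> ('v \<Rightarrow> real) \<Rightarrow> bool" where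
  "reaches \<alpha> W h x y \<longleftrightarrow> (\<exists>p. alpha_path \<alpha> W h p \<and> hd p = x \<and> last p = y)"

definition globally_stable ::
  "dynamics \<Rightarrow> ('v::finite \<Rightarrow> 'v \<Rightarrow> real) \<Rightarrow> ('v \<Rightarrow> real) \<Rightarrow> ('v \<Rightarrow> real) set \<Rightarrow> bool" where
  "globally_stable \<alpha> W h Y \<longleftrightarrow>
     (\<forall>x\<in>configs. \<exists>y\<in>Y. reaches \<alpha> W h x y) \<and>
     (\<forall>y\<in>Y. \<forall>z. z \<notin> Y \<longrightarrow> \<not> reaches \<alpha> W h y z)"

end

theory Submission
  imports Defs
begin

text \<open>
  Player i's utility is x_i times the local field F_i(x) = \<Sum>_j W_ij x_j + h_i, which
  does not depend on x_i. Hence x is an equilibrium iff x_i F_i(x) \<ge> 0 for all i, and an I-step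
  (BR-step) flips a player with x_i F_i(x) < 0 (\<le> 0). Applied to the partition into the
  players at +1 and at -1, h-indecomposability yields an unhappy player in every
  non-consensus configuration, so only \<plusminus>1 can be equilibria. As F is monotone in x,
  flipping unhappy players in one fixed direction keeps earlier flips justified; a sweep
  towards -1 followed by a sweep towards +1 thus I-reaches an equilibrium from any
  configuration. The consensus (\<lambda>_. a) is left by no I-step once it is an equilibrium,
  and by no BR-step once it is strict, i.e. w + a h > 0; under (iii) this holds for a and
  fails for -a.
\<close>

definition local_field ::
  "('v::finite \<Rightarrow> 'v \<Rightarrow> real) \<Rightarrow> ('v \<Rightarrow> real) \<Rightarrow> ('v \<Rightarrow> real) \<Rightarrow> 'v \<Rightarrow> real" where
  "local_field W h x i = (\<Sum>j\<in>UNIV. W i j * x j) + h i"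

lemma utility_eq_local_field: "utility W h i x = x i * local_field W h x i"
  by (simp add: utility_def local_field_def)

lemma local_field_upd_self:
  assumes "network W"
  shows "local_field W h (x(i := a)) i = local_field W h x i"
proof -
  have "W i j * (x(i := a)) j = W i j * x j" for j
    using assms by (cases "j = i") (auto simp: network_def)
  then show ?thesis
    unfolding local_field_def by metis
qed

lemma utility_upd_self:
  "network W \<Longrightarrow> utility W h i (x(i := a)) = a * local_field W h x i"
  by (simp add: utility_eq_local_field local_field_upd_self)

lemma local_field_signed_mono:
  assumes "network W" "\<forall>j. s * x j \<le> s * y j"
  shows "s * local_field W h x i \<le> s * local_field W h y i"
proof -
  have "(\<Sum>j\<in>UNIV. W i j * (s * x j)) \<le> (\<Sum>j\<in>UNIV. W i j * (s * y j))"
    using assms by (intro sum_mono) (simp add: mult_left_mono network_def)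
  then show ?thesis
    by (simp add: local_field_def distrib_left sum_distrib_left algebra_simps)
qed

lemma local_field_const: "local_field W h (\<lambda>_. c) i = c * outdeg W i + h i"
  by (simp add: local_field_def outdeg_def sum_distrib_left mult.commute)

lemma abs_local_field_minus_le:
  assumes "network W" "x \<in> configs"
  shows "\<bar>local_field W h x i - h i\<bar> \<le> outdeg W i"
proof -
  have "\<bar>\<Sum>j\<in>UNIV. W i j * x j\<bar> \<le> (\<Sum>j\<in>UNIV. \<bar>W i j * x j\<bar>)"
    by (rule sum_abs)
  also have "\<dots> = outdeg W i"
    using assms by (auto simp: outdeg_def network_def configs_def abs_mult intro!: sum.cong)
      (metis abs_minus_cancel abs_one)
  finally show ?thesis by (simp add: local_field_def)
qed

lemma local_field_split:
  assumes "x \<in> configs"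
  shows "local_field W h x i = wS W {j. x j = 1} i - wS W (- {j. x j = 1}) i + h i"
proof -
  let ?P = "{j. x j = 1}"
  have "(\<Sum>j\<in>UNIV. W i j * x j) = (\<Sum>j\<in>?P. W i j * x j) + (\<Sum>j\<in>-?P. W i j * x j)"
    by (subst sum.union_disjoint[symmetric]) (auto intro!: sum.cong)
  also have "(\<Sum>j\<in>-?P. W i j * x j) = - wS W (-?P) i"
    using assms by (auto simp: wS_def configs_def sum_negf[symmetric] intro!: sum.cong)
  finally show ?thesis by (simp add: local_field_def wS_def)
qed

lemma equilibria_iff:
  assumes "network W"
  shows "x \<in> equilibria W h \<longleftrightarrow> x \<in> configs \<and> (\<forall>i. 0 \<le> x i * local_field W h x i)"
proof -
  have "(\<forall>a\<in>{-1, 1}. a * local_field W h x i \<le> x i * local_field W h x i)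
          \<longleftrightarrow> 0 \<le> x i * local_field W h x i" if "x \<in> configs" for i
    using that by (cases "x i = 1") (auto simp: configs_def)
  then show ?thesis
    by (auto simp: equilibria_def utility_upd_self[OF assms] utility_eq_local_field[symmetric])
qed

lemma not_consensus_has_unhappy_player:
  assumes "h_indecomposable W h" "x \<in> configs" "x \<noteq> (\<lambda>_. 1)" "x \<noteq> (\<lambda>_. -1)"
  shows "\<exists>i. x i * local_field W h x i < 0"
proof -
  let ?P = "{j. x j = 1}"
  have x_cases: "x j = 1 \<or> x j = -1" for j
    using assms(2) by (auto simp: configs_def)
  have "?P \<noteq> {}"
    using assms(4) x_cases by (auto simp: fun_eq_iff)
  moreover have "- ?P \<noteq> {}"
    using assms(3) by (auto simp: fun_eq_iff)
  moreover have "?P \<noteq> {} \<and> - ?P \<noteq> {} \<longrightarrow>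
      (\<exists>i\<in>?P. wS W ?P i + h i < wS W (- ?P) i) \<or> (\<exists>i\<in>- ?P. wS W (- ?P) i - h i < wS W ?P i)"
    using assms(1) unfolding h_indecomposable_def by (rule spec)
  ultimately consider
      i where "x i = 1" "wS W ?P i + h i < wS W (- ?P) i"
    | i where "x i \<noteq> 1" "wS W (- ?P) i - h i < wS W ?P i"
    by auto
  then show ?thesis
  proof cases
    case (1 i)
    then have "local_field W h x i < 0"
      using local_field_split[OF assms(2), of W h i] by linarith
    with 1(1) show ?thesis by (intro exI[of _ i]) simp
  next
    case (2 i)
    then have "0 < local_field W h x i"
      using local_field_split[OF assms(2), of W h i] by linarith
    moreover have "x i = -1" using 2(1) x_cases by blast
    ultimately show ?thesis by (intro exI[of _ i]) simp
  qed
qed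

lemma equilibria_subset_consensus:
  assumes "network W" "h_indecomposable W h"
  shows "equilibria W h \<subseteq> {(\<lambda>_. 1), (\<lambda>_. -1)}"
proof
  fix x assume "x \<in> equilibria W h"
  then have "x \<in> configs" "\<forall>i. 0 \<le> x i * local_field W h x i"
    by (auto simp: equilibria_iff[OF assms(1)])
  then show "x \<in> {(\<lambda>_. 1), (\<lambda>_. -1)}"
    using not_consensus_has_unhappy_player[OF assms(2)] by (metis insert_iff linorder_not_less)
qed

definition improving_step ::
  "dynamics \<Rightarrow> ('v::finite \<Rightarrow> 'v \<Rightarrow> real) \<Rightarrow> ('v \<Rightarrow> real) \<Rightarrow>
     ('v \<Rightarrow> real) \<Rightarrow> ('v \<Rightarrow> real) \<Rightarrow> bool" where
  "improving_step \<alpha> W h x y \<longleftrightarrow> (\<exists>i. adm_step x y i \<and> improves \<alpha> W h i x y)"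

lemma alpha_path_Nil [simp]: "\<not> alpha_path \<alpha> W h []"
  by (simp add: alpha_path_def)

lemma alpha_path_singleton [simp]: "alpha_path \<alpha> W h [x] \<longleftrightarrow> x \<in> configs"
  by (simp add: alpha_path_def)

lemma alpha_path_Cons_Cons:
  "alpha_path \<alpha> W h (x # y # p) \<longleftrightarrow> improving_step \<alpha> W h x y \<and> alpha_path \<alpha> W h (y # p)"
  unfolding alpha_path_def improving_step_def adm_step_def
  by (auto simp: All_less_Suc2)

lemma alpha_path_rtranclp:
  "alpha_path \<alpha> W h p \<Longrightarrow> (improving_step \<alpha> W h)\<^sup>*\<^sup>* (hd p) (last p)"
  by (induction p rule: induct_list012)
    (auto simp: alpha_path_Cons_Cons intro: converse_rtranclp_into_rtranclp)

lemma reaches_iff_rtranclp: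
  "reaches \<alpha> W h x y \<longleftrightarrow> x \<in> configs \<and> (improving_step \<alpha> W h)\<^sup>*\<^sup>* x y"
proof
  assume "reaches \<alpha> W h x y"
  then obtain p where "alpha_path \<alpha> W h p" "hd p = x" "last p = y"
    unfolding reaches_def by blast
  then show "x \<in> configs \<and> (improving_step \<alpha> W h)\<^sup>*\<^sup>* x y"
    using alpha_path_rtranclp[of \<alpha> W h p] hd_in_set[of p] by (auto simp: alpha_path_def)
next
  assume "x \<in> configs \<and> (improving_step \<alpha> W h)\<^sup>*\<^sup>* x y"
  then have "(improving_step \<alpha> W h)\<^sup>*\<^sup>* x y" "x \<in> configs" by auto
  then show "reaches \<alpha> W h x y"
  proof (induction rule: converse_rtranclp_induct)
    case base
    then show ?case unfolding reaches_def by (intro exI[of _ "[y]"]) simp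
  next
    case (step x x')
    then have "x' \<in> configs" by (auto simp: improving_step_def adm_step_def)
    with step obtain p where p: "alpha_path \<alpha> W h p" "hd p = x'" "last p = y"
      unfolding reaches_def by blast
    then have "p = x' # tl p" by (cases p) auto
    then have "alpha_path \<alpha> W h (x # p)"
      using step.hyps(1) p(1) by (metis alpha_path_Cons_Cons)
    then show ?case
      unfolding reaches_def using p by (intro exI[of _ "x # p"]) auto
  qed
qed

lemma improving_step_Imp_imp: "improving_step Imp W h x y \<Longrightarrow> improving_step \<alpha> W h x y"
  by (cases \<alpha>) (auto simp: improving_step_def improves_def)

lemma reaches_Imp_imp: "reaches Imp W h x y \<Longrightarrow> reaches \<alpha> W h x y"
  unfolding reaches_iff_rtranclp by (metis improving_step_Imp_imp mono_rtranclp)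

lemma adm_step_utility:
  assumes "network W" "adm_step x y i"
  shows "utility W h i y = - utility W h i x"
proof -
  have "x i = 1 \<or> x i = -1" "y i = 1 \<or> y i = -1" "y i \<noteq> x i"
    using assms(2) by (auto simp: adm_step_def configs_def)
  then have "y = x(i := - x i)"
    using assms(2) by (auto simp: adm_step_def)
  then show ?thesis by (simp add: utility_eq_local_field local_field_upd_self[OF assms(1)])
qed

lemma improving_step_Imp_flip:
  assumes "network W" "x \<in> configs" "x i * local_field W h x i < 0"
  shows "improving_step Imp W h x (x(i := - x i))"
proof -
  have "x i = 1 \<or> x i = -1"
    using assms(2) by (simp add: configs_def)
  moreover from this have "x(i := - x i) \<in> configs"
    using assms(2) by (auto simp: configs_def)
  ultimately have "adm_step x (x(i := - x i)) i"
    using assms(2) by (auto simp: adm_step_def)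
  moreover from this have "improves Imp W h i x (x(i := - x i))"
    using assms(3) by (simp add: improves_def utility_eq_local_field local_field_upd_self[OF assms(1)])
  ultimately show ?thesis unfolding improving_step_def by blast
qed

lemma no_Imp_step_from_equilibrium:
  assumes "network W" "x \<in> equilibria W h"
  shows "\<not> improving_step Imp W h x y"
proof
  assume "improving_step Imp W h x y"
  then obtain i where "adm_step x y i" "utility W h i x < utility W h i y"
    by (auto simp: improving_step_def improves_def)
  moreover have "0 \<le> utility W h i x"
    using assms by (simp add: equilibria_iff utility_eq_local_field)
  ultimately show False
    using adm_step_utility[OF assms(1)] by fastforce
qed

lemma no_BR_step_from_strict_equilibrium:
  assumes "network W" "\<forall>i. 0 < x i * local_field W h x i"
  shows "\<not> improving_step BR W h x y"
proof
  assume "improving_step BR W h x y"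
  then obtain i where "adm_step x y i" "utility W h i x \<le> utility W h i y"
    by (auto simp: improving_step_def improves_def)
  moreover have "0 < utility W h i x"
    using assms by (simp add: utility_eq_local_field)
  ultimately show False
    using adm_step_utility[OF assms(1)] by fastforce
qed

lemma reaches_configs: "reaches \<alpha> W h x y \<Longrightarrow> y \<in> configs"
  unfolding reaches_def alpha_path_def by (metis last_in_set subsetD)

text \<open>
  Flipping unhappy players from -s to s only raises s F_j for every j, so players flipped
  earlier stay strictly happy; the number of players at -s drops, so this terminates.
\<close>

lemma reaches_Imp_drift:
  assumes "network W" "x \<in> configs" "s \<in> {-1, 1}"
  shows "\<exists>y. reaches Imp W h x y \<and> (\<forall>i. s * x i \<le> s * y i)
           \<and> (\<forall>i. y i = - s \<longrightarrow> 0 \<le> y i * local_field W h y i)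
           \<and> (\<forall>i. y i \<noteq> x i \<longrightarrow> 0 < y i * local_field W h y i)"
  using assms(2)
proof (induction "card {i. x i = - s}" arbitrary: x rule: less_induct)
  case less
  show ?case
  proof (cases "\<forall>i. x i = - s \<longrightarrow> 0 \<le> x i * local_field W h x i")
    case True
    then show ?thesis
      using less.prems by (intro exI[of _ x]) (simp add: reaches_iff_rtranclp)
  next
    case False
    then obtain i where i: "x i = - s" "x i * local_field W h x i < 0"
      by force
    define x' where "x' = x(i := s)"
    have ss: "s * s = 1" using assms(3) by auto
    have "x' = x(i := - x i)" using i by (simp add: x'_def)
    then have step: "improving_step Imp W h x x'"
      using improving_step_Imp_flip[OF assms(1) less.prems i(2)] by simp
    then have "x' \<in> configs" by (auto simp: improving_step_def adm_step_def)
    moreover have "card {j. x' j = - s} < card {j. x j = - s}"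
    proof -
      have "{j. x' j = - s} = {j. x j = - s} - {i}"
        using ss by (auto simp: x'_def)
      then show ?thesis
        using i(1) card_Diff1_less[OF finite, of i "{j. x j = - s}"] by simp
    qed
    ultimately obtain y where y: "reaches Imp W h x' y" "\<forall>j. s * x' j \<le> s * y j"
        "\<forall>j. y j = - s \<longrightarrow> 0 \<le> y j * local_field W h y j"
        "\<forall>j. y j \<noteq> x' j \<longrightarrow> 0 < y j * local_field W h y j"
      using less.hyps by blast
    have "reaches Imp W h x y"
      using y(1) step less.prems
      by (auto simp: reaches_iff_rtranclp intro: converse_rtranclp_into_rtranclp)
    moreover have "\<forall>j. s * x j \<le> s * y j"
    proof -
      have "s * x j \<le> s * x' j" for j
        using i(1) ss by (simp add: x'_def)
      then show ?thesis using y(2) order_trans by blast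
    qed
    moreover have "y i = s"
    proof -
      have "y i = 1 \<or> y i = -1" using reaches_configs[OF y(1)] by (simp add: configs_def)
      moreover have "1 \<le> s * y i" using y(2) ss by (metis fun_upd_same x'_def)
      ultimately show ?thesis using assms(3) by auto
    qed
    moreover have "\<forall>j. y j \<noteq> x j \<longrightarrow> 0 < y j * local_field W h y j"
    proof (intro allI impI)
      fix j assume "y j \<noteq> x j"
      show "0 < y j * local_field W h y j"
      proof (cases "j = i")
        case True
        have "s * local_field W h x' i \<le> s * local_field W h y i"
          using local_field_signed_mono[OF assms(1) y(2)] .
        then show ?thesis
          using True i \<open>y i = s\<close> local_field_upd_self[OF assms(1)] by (simp add: x'_def)
      next
        case False
        then show ?thesis using y(4) \<open>y j \<noteq> x j\<close> by (simp add: x'_def)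
      qed
    qed
    ultimately show ?thesis using y(3) by blast
  qed
qed

lemma reaches_trans: "reaches \<alpha> W h x y \<Longrightarrow> reaches \<alpha> W h y z \<Longrightarrow> reaches \<alpha> W h x z"
  unfolding reaches_iff_rtranclp by auto

lemma reaches_Imp_equilibrium:
  assumes "network W" "x \<in> configs"
  shows "\<exists>z\<in>equilibria W h. reaches Imp W h x z"
proof -
  obtain y where y: "reaches Imp W h x y" "\<forall>i. y i = 1 \<longrightarrow> 0 \<le> y i * local_field W h y i"
    using reaches_Imp_drift[OF assms, of "-1" h] by auto
  obtain z where z: "reaches Imp W h y z" "\<forall>i. y i \<le> z i"
      "\<forall>i. z i = -1 \<longrightarrow> 0 \<le> z i * local_field W h z i"
      "\<forall>i. z i \<noteq> y i \<longrightarrow> 0 < z i * local_field W h z i"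
    using reaches_Imp_drift[OF assms(1) reaches_configs[OF y(1)], of 1 h] by auto
  have "0 \<le> z i * local_field W h z i" for i
  proof -
    have "z i = 1 \<or> z i = -1" "y i = 1 \<or> y i = -1"
      using reaches_configs[OF z(1)] reaches_configs[OF y(1)] by (auto simp: configs_def)
    moreover have "local_field W h y i \<le> local_field W h z i"
      using local_field_signed_mono[OF assms(1), of 1 y z] z(2) by simp
    ultimately show ?thesis
      using y(2)[rule_format, of i] z(3,4)[rule_format, of i] by (cases "z i = 1"; cases "y i = 1") auto
  qed
  then show ?thesis
    using reaches_configs[OF z(1)] reaches_trans[OF y(1) z(1)]
    by (auto simp: equilibria_iff[OF assms(1)])
qed

lemma globally_stable_if_absorbing:
  assumes "network W" "equilibria W h \<subseteq> Y" "\<And>y z. y \<in> Y \<Longrightarrow> \<not> improving_step \<alpha> W h y z"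
  shows "globally_stable \<alpha> W h Y"
  unfolding globally_stable_def
proof (intro conjI ballI allI impI)
  fix x :: "'a \<Rightarrow> real"
  assume "x \<in> configs"
  then show "\<exists>y\<in>Y. reaches \<alpha> W h x y"
    using reaches_Imp_equilibrium[OF assms(1)] reaches_Imp_imp assms(2) by blast
next
  fix y z :: "'a \<Rightarrow> real"
  assume "y \<in> Y" "z \<notin> Y"
  then show "\<not> reaches \<alpha> W h y z"
    using assms(3)[of y] by (metis converse_rtranclpE reaches_iff_rtranclp)
qed

lemma outdeg_nonneg: "network W \<Longrightarrow> 0 \<le> outdeg W i"
  by (simp add: outdeg_def network_def sum_nonneg)

lemma consensus_local_field:
  "c \<in> {-1, 1} \<Longrightarrow> c * local_field W h (\<lambda>_. c) i = outdeg W i + c * h i"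
  by (auto simp: local_field_const algebra_simps)

lemma consensus_in_equilibria_iff:
  assumes "network W" "c \<in> {-1, 1}"
  shows "(\<lambda>_. c) \<in> equilibria W h \<longleftrightarrow> (\<forall>i. 0 \<le> outdeg W i + c * h i)"
  using assms(2) by (auto simp: equilibria_iff[OF assms(1)] consensus_local_field configs_def)

text \<open>
  If w_j + a h_j \<le> 0, start from the consensus a with j switched to -a and drift towards
  -a: player j is content at -a, and i0 never switches because w_i0 < a h_i0 keeps it
  strictly content at a. The result is a non-consensus equilibrium.
\<close>

lemma consensus_strict_if_opposite_unhappy:
  assumes "network W" "h_indecomposable W h" "a \<in> {-1, 1}" "outdeg W i0 < a * h i0"
  shows "0 < outdeg W j + a * h j"
proof (rule ccontr)
  assume "\<not> 0 < outdeg W j + a * h j"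
  then have j: "outdeg W j + a * h j \<le> 0" by simp
  define x where "x = (\<lambda>_. a)(j := - a)"
  have aa: "a * a = 1" using assms(3) by auto
  have "x \<in> configs" using assms(3) by (auto simp: x_def configs_def)
  then obtain y where y: "reaches Imp W h x y" "\<forall>i. - a * x i \<le> - a * y i"
      "\<forall>i. y i = a \<longrightarrow> 0 \<le> y i * local_field W h y i"
      "\<forall>i. y i \<noteq> x i \<longrightarrow> 0 < y i * local_field W h y i"
    using reaches_Imp_drift[OF assms(1), of x "- a" h] assms(3) by auto
  have y_cases: "y i = a \<or> y i = - a" for i
    using reaches_configs[OF y(1)] assms(3) by (auto simp: configs_def)
  have field_bound: "\<bar>local_field W h y i - h i\<bar> \<le> outdeg W i" for i
    using abs_local_field_minus_le[OF assms(1) reaches_configs[OF y(1)]] .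
  have "i0 \<noteq> j"
    using assms(4) j outdeg_nonneg[OF assms(1), of j] by auto
  have yj: "y j = - a"
    using y(2)[rule_format, of j] y_cases[of j] assms(3) by (auto simp: x_def)
  have yi0: "y i0 = a"
  proof (rule ccontr)
    assume "y i0 \<noteq> a"
    then have "y i0 = - a" using y_cases by blast
    moreover have "x i0 = a" using \<open>i0 \<noteq> j\<close> by (simp add: x_def)
    ultimately have "0 < - a * local_field W h y i0"
      using y(4)[rule_format, of i0] assms(3) by auto
    then show False
      using field_bound[of i0] assms(3,4) by (auto simp: abs_le_iff)
  qed
  have "0 \<le> y i * local_field W h y i" for i
  proof (cases "y i = a")
    case False
    show ?thesis
    proof (cases "i = j")
      case True
      then show ?thesis using yj j field_bound[of j] assms(3) by (auto simp: abs_le_iff)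
    next
      case False
      then show ?thesis
        using y(4)[rule_format, of i] \<open>y i \<noteq> a\<close> by (simp add: x_def less_imp_le)
    qed
  qed (use y(3) in blast)
  then have "y \<in> equilibria W h"
    using reaches_configs[OF y(1)] by (simp add: equilibria_iff[OF assms(1)])
  then show False
    using equilibria_subset_consensus[OF assms(1,2)] yj yi0 assms(3) by (auto dest: fun_cong)
qed

lemma no_BR_step_from_strict_consensus:
  assumes "network W" "c \<in> {-1, 1}" "\<forall>i. 0 < outdeg W i + c * h i"
  shows "\<not> improving_step BR W h (\<lambda>_. c) z"
  using assms by (intro no_BR_step_from_strict_equilibrium) (simp_all add: consensus_local_field)

lemma equilibria_eq_consensus:
  assumes "network W" "h_indecomposable W h" "\<forall>i. \<bar>h i\<bar> \<le> outdeg W i"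
  shows "equilibria W h = {(\<lambda>_. 1), (\<lambda>_. -1)}"
proof -
  have "(\<lambda>_. c) \<in> equilibria W h" if "c \<in> {-1, 1}" for c
  proof -
    have "0 \<le> outdeg W i + c * h i" for i
      using that assms(3)[rule_format, of i] by (auto simp: abs_le_iff)
    then show ?thesis by (simp add: consensus_in_equilibria_iff[OF assms(1) that])
  qed
  then show ?thesis
    using equilibria_subset_consensus[OF assms(1,2)] by auto
qed

lemma equilibria_eq_single_consensus:
  assumes "network W" "h_indecomposable W h" "a \<in> {-1, 1}" "outdeg W i0 < a * h i0"
  shows "equilibria W h = {(\<lambda>_. a)}"
proof -
  have opposite: "- a \<in> {-1, 1}" using assms(3) by auto
  have not_opposite: "(\<lambda>_. - a) \<notin> equilibria W h"
    unfolding consensus_in_equilibria_iff[OF assms(1) opposite] using assms(4) by (auto intro!: exI[of _ i0])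
  have "x = (\<lambda>_. a)" if "x \<in> equilibria W h" for x
    using that not_opposite equilibria_subset_consensus[OF assms(1,2)] assms(3) by auto
  moreover have "(\<lambda>_. a) \<in> equilibria W h"
    using consensus_strict_if_opposite_unhappy[OF assms]
    by (simp add: consensus_in_equilibria_iff[OF assms(1,3)] less_imp_le)
  ultimately show ?thesis by blast
qed

theorem corollary1:
  fixes W :: "'v::finite \<Rightarrow> 'v \<Rightarrow> real" and h :: "'v \<Rightarrow> real"
  assumes "network W" and "h_indecomposable W h"
  shows "((\<forall>i. \<bar>h i\<bar> \<le> outdeg W i) \<longrightarrow>
            equilibria W h = {(\<lambda>_. 1), (\<lambda>_. -1)} \<and>
            globally_stable Imp W h {(\<lambda>_. 1), (\<lambda>_. -1)})
       \<and> ((\<forall>i. \<bar>h i\<bar> < outdeg W i) \<longrightarrow>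
            equilibria W h = {(\<lambda>_. 1), (\<lambda>_. -1)} \<and>
            globally_stable BR W h {(\<lambda>_. 1), (\<lambda>_. -1)})
       \<and> (\<forall>a::real. a \<in> {-1, 1} \<longrightarrow> (\<exists>i. outdeg W i < a * h i) \<longrightarrow>
            equilibria W h = {(\<lambda>_. a)} \<and>
            globally_stable BR W h {(\<lambda>_. a)})"
proof (intro conjI impI allI)
  note consensus = equilibria_subset_consensus[OF assms]
  show "equilibria W h = {(\<lambda>_. 1), (\<lambda>_. -1)}"
    if "\<forall>i. \<bar>h i\<bar> \<le> outdeg W i"
    using equilibria_eq_consensus[OF assms that] .
  show "globally_stable Imp W h {(\<lambda>_. 1), (\<lambda>_. -1)}"
    if "\<forall>i. \<bar>h i\<bar> \<le> outdeg W i"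
    by (rule globally_stable_if_absorbing[OF assms(1) consensus])
      (use equilibria_eq_consensus[OF assms that] no_Imp_step_from_equilibrium[OF assms(1)] in blast)
  show "equilibria W h = {(\<lambda>_. 1), (\<lambda>_. -1)}"
    if "\<forall>i. \<bar>h i\<bar> < outdeg W i"
    using equilibria_eq_consensus[OF assms] that by (simp add: less_imp_le)
  show "globally_stable BR W h {(\<lambda>_. 1), (\<lambda>_. -1)}"
    if h: "\<forall>i. \<bar>h i\<bar> < outdeg W i"
  proof (rule globally_stable_if_absorbing[OF assms(1) consensus])
    have "0 < outdeg W i + c * h i" if "c \<in> {-1, 1}" for c i
      using that h[rule_format, of i] by (auto simp: abs_less_iff)
    then show "\<not> improving_step BR W h y z" if "y \<in> {(\<lambda>_. 1), (\<lambda>_. -1)}" for y z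
      using that no_BR_step_from_strict_consensus[OF assms(1)] by blast
  qed
  fix a :: real
  assume a: "a \<in> {-1, 1}" and "\<exists>i. outdeg W i < a * h i"
  then obtain i0 where i0: "outdeg W i0 < a * h i0" by blast
  show eq: "equilibria W h = {(\<lambda>_. a)}"
    using equilibria_eq_single_consensus[OF assms a i0] .
  have "\<forall>i. 0 < outdeg W i + a * h i"
    using consensus_strict_if_opposite_unhappy[OF assms a i0] by blast
  then show "globally_stable BR W h {(\<lambda>_. a)}"
    using globally_stable_if_absorbing[OF assms(1)] eq
      no_BR_step_from_strict_consensus[OF assms(1) a] by blast
qed

end
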